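(* Consider all equations $i\psi_t+\psi_{xx}+|\psi|^\gamma\psi+V(t,x)\psi=0$, with $\gamma$ ranging over nonzero reals and $V$ over arbitrary smooth complex-valued functions. The intersection of their maximal Lie invariance algebras $A^{\max}(\gamma,V)$ (the kernel algebra of the class) is the one-dimensional algebra $\langle M\rangle$, where $M=i(\psi\partial_\psi-\psi^*\partial_{\psi^*})$.
   Context: $\psi(t,x)$ is a complex unknown function. Lie symmetries are vector fields on the space of $(t,x,\psi,\psi^* )$, with $\psi^*$ (complex conjugate) treated as an independent variable. $A^{\max}(\gamma,V)$ denotes the Lie algebra of all vector fields generating local point symmetries of the given equation. *)

theory Defs
  imports "HOL-Analysis.Analysis"
begin

definition dirder :: "'a::real_normed_vector \<Rightarrow> ('a \<Rightarrow> 'b::real_normed_vector) \<Rightarrow> 'a \<Rightarrow> 'b" where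
  "dirder b f p = vector_derivative (\<lambda>s::real. f (p + s *\<^sub>R b)) (at 0)"

definition Cinf_on :: "'a::euclidean_space set \<Rightarrow> ('a \<Rightarrow> 'b::real_normed_vector) \<Rightarrow> bool" where
  "Cinf_on S f \<longleftrightarrow>
     (\<forall>bs. set bs \<subseteq> Basis \<longrightarrow>
        continuous_on S (foldr dirder bs f) \<and>
        (\<forall>b\<in>Basis. \<forall>p\<in>S. (\<lambda>s::real. foldr dirder bs f (p + s *\<^sub>R b)) differentiable (at 0)))"

section \<open>Space of (t, x, u, v), psi = u + i v\<close>

type_synonym pt = "real \<times> real \<times> real \<times> real"

definition Omega :: "pt set" where
  "Omega = {(t, x, u, v). (u, v) \<noteq> (0, 0)}"

text \<open>Vector fields Q = tau d_t + xi d_x + etaU d_u + etaV d_v, as maps pt => pt.\<close>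
definition tau :: "(pt \<Rightarrow> pt) \<Rightarrow> pt \<Rightarrow> real" where "tau Q p = fst (Q p)"
definition xi :: "(pt \<Rightarrow> pt) \<Rightarrow> pt \<Rightarrow> real" where "xi Q p = fst (snd (Q p))"
definition etaU :: "(pt \<Rightarrow> pt) \<Rightarrow> pt \<Rightarrow> real" where "etaU Q p = fst (snd (snd (Q p)))"
definition etaV :: "(pt \<Rightarrow> pt) \<Rightarrow> pt \<Rightarrow> real" where "etaV Q p = snd (snd (snd (Q p)))"

text \<open>M = i(psi d_psi - psi* d_psi*) = -v d_u + u d_v.\<close>
definition M_field :: "pt \<Rightarrow> pt" where
  "M_field p = (case p of (t, x, u, v) \<Rightarrow> (0, 0, - v, u))"

record jet =
  jt :: real  jx :: real  ju :: real  jv :: real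
  jut :: real  jvt :: real  jux :: real  jvx :: real
  jutt :: real  jutx :: real  juxx :: real
  jvtt :: real  jvtx :: real  jvxx :: real

definition base :: "jet \<Rightarrow> pt" where
  "base J = (jt J, jx J, ju J, jv J)"

definition lift :: "(pt \<Rightarrow> real) \<Rightarrow> jet \<Rightarrow> real" where
  "lift F J = F (base J)"

definition jpd :: "((real \<Rightarrow> real) \<Rightarrow> jet \<Rightarrow> jet) \<Rightarrow> (jet \<Rightarrow> real) \<Rightarrow> (jet \<Rightarrow> real) \<Rightarrow> jet \<Rightarrow> real" where
  "jpd upd sel G J = deriv (\<lambda>s. G (upd (\<lambda>_. s) J)) (sel J)"

text \<open>Total derivatives, applied to functions of jets of order at most one.\<close>
definition Dt :: "(jet \<Rightarrow> real) \<Rightarrow> jet \<Rightarrow> real" where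
  "Dt G J = jpd jt_update jt G J
     + jut J * jpd ju_update ju G J + jvt J * jpd jv_update jv G J
     + jutt J * jpd jut_update jut G J + jvtt J * jpd jvt_update jvt G J
     + jutx J * jpd jux_update jux G J + jvtx J * jpd jvx_update jvx G J"

definition Dx :: "(jet \<Rightarrow> real) \<Rightarrow> jet \<Rightarrow> real" where
  "Dx G J = jpd jx_update jx G J
     + jux J * jpd ju_update ju G J + jvx J * jpd jv_update jv G J
     + jutx J * jpd jut_update jut G J + jvtx J * jpd jvt_update jvt G J
     + juxx J * jpd jux_update jux G J + jvxx J * jpd jvx_update jvx G J"

definition prc :: "(pt \<Rightarrow> pt) \<Rightarrow> ((jet \<Rightarrow> real) \<Rightarrow> jet \<Rightarrow> real) \<Rightarrow> (jet \<Rightarrow> real)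
                    \<Rightarrow> (jet \<Rightarrow> real) \<Rightarrow> (jet \<Rightarrow> real) \<Rightarrow> jet \<Rightarrow> real" where
  "prc Q D E wt wx J = D E J - wt J * D (lift (tau Q)) J - wx J * D (lift (xi Q)) J"

definition pr2 :: "(pt \<Rightarrow> pt) \<Rightarrow> (jet \<Rightarrow> real) \<Rightarrow> jet \<Rightarrow> real" where
  "pr2 Q F J =
    (let pu = lift (etaU Q); pv = lift (etaV Q);
         ut = prc Q Dt pu jut jux; ux = prc Q Dx pu jut jux;
         vt = prc Q Dt pv jvt jvx; vx = prc Q Dx pv jvt jvx;
         utt = prc Q Dt ut jutt jutx; utx = prc Q Dx ut jutt jutx; uxx = prc Q Dx ux jutx juxx;
         vtt = prc Q Dt vt jvtt jvtx; vtx = prc Q Dx vt jvtt jvtx; vxx = prc Q Dx vx jvtx jvxx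
     in lift (tau Q) J * jpd jt_update jt F J + lift (xi Q) J * jpd jx_update jx F J
      + pu J * jpd ju_update ju F J + pv J * jpd jv_update jv F J
      + ut J * jpd jut_update jut F J + vt J * jpd jvt_update jvt F J
      + ux J * jpd jux_update jux F J + vx J * jpd jvx_update jvx F J
      + utt J * jpd jutt_update jutt F J + utx J * jpd jutx_update jutx F J
      + uxx J * jpd juxx_update juxx F J
      + vtt J * jpd jvtt_update jvtt F J + vtx J * jpd jvtx_update jvtx F J
      + vxx J * jpd jvxx_update jvxx F J)"

definition nls :: "real \<Rightarrow> (real \<times> real \<Rightarrow> complex) \<Rightarrow> jet \<Rightarrow> complex" where
  "nls \<gamma> V J =
     \<i> * Complex (jut J) (jvt J) + Complex (juxx J) (jvxx J)
     + of_real (cmod (Complex (ju J) (jv J)) powr \<gamma>) * Complex (ju J) (jv J)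
     + V (jt J, jx J) * Complex (ju J) (jv J)"

text \<open>Infinitesimal invariance criterion for the system Re = 0, Im = 0
  (equivalently the equation and its complex conjugate).\<close>
definition is_Lie_symmetry :: "real \<Rightarrow> (real \<times> real \<Rightarrow> complex) \<Rightarrow> (pt \<Rightarrow> pt) \<Rightarrow> bool" where
  "is_Lie_symmetry \<gamma> V Q \<longleftrightarrow>
     (\<forall>J. base J \<in> Omega \<longrightarrow> nls \<gamma> V J = 0 \<longrightarrow>
        pr2 Q (\<lambda>K. Re (nls \<gamma> V K)) J = 0 \<and> pr2 Q (\<lambda>K. Im (nls \<gamma> V K)) J = 0)"

definition A_max :: "real \<Rightarrow> (real \<times> real \<Rightarrow> complex) \<Rightarrow> (pt \<Rightarrow> pt) set" where
  "A_max \<gamma> V = {Q. Cinf_on Omega Q \<and> is_Lie_symmetry \<gamma> V Q}"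

end

theory Submission
  imports Defs
begin

text \<open>
  Since \<open>V\<close> is arbitrary, at any jet one may choose \<open>V(t, x)\<close> so that the equation holds there,
  and the invariance conditions become pointwise identities for the coefficients of the field.
  Potentials affine in \<open>t\<close> and \<open>x\<close> with arbitrary complex slopes force \<open>\<tau> = \<xi> = 0\<close>.
  Constant potentials compared for \<open>\<gamma> = 1\<close> and \<open>\<gamma> = -1\<close> force \<open>\<eta>\<^sup>u u + \<eta>\<^sup>v v = 0\<close>,
  and varying \<open>\<psi>\<^sub>t\<close> forces \<open>\<eta>\<^sup>u\<^sub>u = \<eta>\<^sup>v\<^sub>v = 0\<close>; together this makes
  \<open>(\<eta>\<^sup>u, \<eta>\<^sup>v) = c(t, x) (-v, u)\<close>.  The jets at \<open>\<psi> = 1\<close> with \<open>\<psi>\<^sub>x = 0\<close> and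
  \<open>\<psi>\<^sub>x = \<i>\<close> then give \<open>c\<^sub>t = c\<^sub>x = 0\<close>.  Conversely, \<open>M\<close> generates the phase rotations
  \<open>\<psi> \<mapsto> e\<^sup>i\<^sup>\<epsilon> \<psi>\<close>, which preserve every equation of the class.
\<close>

section \<open>Partial derivatives where \<open>\<psi> \<noteq> 0\<close>\<close>

lemma mem_Omega_iff [simp]: "(t, x, u, v) \<in> Omega \<longleftrightarrow> u \<noteq> 0 \<or> v \<noteq> 0"
  by (simp add: Omega_def)

lemma eventually_nhds_Omega:
  assumes "(t, x, u, v) \<in> Omega"
  shows "eventually (\<lambda>s. (t, x, s, v) \<in> Omega) (nhds u)"
    and "eventually (\<lambda>s. (t, x, u, s) \<in> Omega) (nhds v)"
proof -
  have ev: "eventually (\<lambda>s. (s, b) \<noteq> (0, 0)) (nhds a)" if "(a, b) \<noteq> (0, 0)" for a b :: real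
    by (rule tendsto_imp_eventually_ne[OF tendsto_Pair[OF filterlim_ident tendsto_const] that])
  have "(u, v) \<noteq> (0, 0)" "(v, u) \<noteq> (0, 0)" using assms by auto
  show "eventually (\<lambda>s. (t, x, s, v) \<in> Omega) (nhds u)"
    using ev[OF \<open>(u, v) \<noteq> (0, 0)\<close>] by (rule eventually_mono) (simp add: Omega_def)
  show "eventually (\<lambda>s. (t, x, u, s) \<in> Omega) (nhds v)"
    using ev[OF \<open>(v, u) \<noteq> (0, 0)\<close>] by (rule eventually_mono) (auto simp: Omega_def)
qed

definition partial_t :: "(pt \<Rightarrow> real) \<Rightarrow> pt \<Rightarrow> real" where
  "partial_t F p = (case p of (t, x, u, v) \<Rightarrow> deriv (\<lambda>s. F (s, x, u, v)) t)"

definition partial_x :: "(pt \<Rightarrow> real) \<Rightarrow> pt \<Rightarrow> real" where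
  "partial_x F p = (case p of (t, x, u, v) \<Rightarrow> deriv (\<lambda>s. F (t, s, u, v)) x)"

definition partial_u :: "(pt \<Rightarrow> real) \<Rightarrow> pt \<Rightarrow> real" where
  "partial_u F p = (case p of (t, x, u, v) \<Rightarrow> deriv (\<lambda>s. F (t, x, s, v)) u)"

definition partial_v :: "(pt \<Rightarrow> real) \<Rightarrow> pt \<Rightarrow> real" where
  "partial_v F p = (case p of (t, x, u, v) \<Rightarrow> deriv (\<lambda>s. F (t, x, u, s)) v)"

lemma partials_cong_Omega:
  assumes p: "p \<in> Omega" and FG: "\<And>q. q \<in> Omega \<Longrightarrow> F q = G q"
  shows "partial_t F p = partial_t G p" "partial_x F p = partial_x G p"
    "partial_u F p = partial_u G p" "partial_v F p = partial_v G p"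
proof -
  obtain t x u v where p_eq: "p = (t, x, u, v)" by (cases p)
  have uv: "u \<noteq> 0 \<or> v \<noteq> 0" using p p_eq by simp
  show "partial_t F p = partial_t G p" "partial_x F p = partial_x G p"
    using uv by (simp_all add: p_eq partial_t_def partial_x_def FG)
  show "partial_u F p = partial_u G p"
    unfolding p_eq partial_u_def prod.case
    by (rule deriv_cong_ev[OF eventually_mono[OF eventually_nhds_Omega(1)[OF p[unfolded p_eq]]] refl])
      (rule FG)
  show "partial_v F p = partial_v G p"
    unfolding p_eq partial_v_def prod.case
    by (rule deriv_cong_ev[OF eventually_mono[OF eventually_nhds_Omega(2)[OF p[unfolded p_eq]]] refl])
      (rule FG)
qed

lemma partials_vanishing_on_Omega:
  assumes "p \<in> Omega" and "\<And>q. q \<in> Omega \<Longrightarrow> F q = 0"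
  shows "partial_t F p = 0" "partial_x F p = 0" "partial_u F p = 0" "partial_v F p = 0"
  using partials_cong_Omega[OF assms(1), of F "\<lambda>_. 0"] assms(2)
  by (simp_all add: partial_t_def partial_x_def partial_u_def partial_v_def split: prod.splits)

lemma base_update [simp]:
  "base (jut_update f J) = base J" "base (jvt_update f J) = base J"
  "base (jux_update f J) = base J" "base (jvx_update f J) = base J"
  "base (jutt_update f J) = base J" "base (jutx_update f J) = base J"
  "base (juxx_update f J) = base J" "base (jvtt_update f J) = base J"
  "base (jvtx_update f J) = base J" "base (jvxx_update f J) = base J"
  by (simp_all add: base_def)

lemma jpd_lift:
  "jpd jt_update jt (lift F) J = partial_t F (base J)"
  "jpd jx_update jx (lift F) J = partial_x F (base J)"
  "jpd ju_update ju (lift F) J = partial_u F (base J)"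
  "jpd jv_update jv (lift F) J = partial_v F (base J)"
  "jpd jut_update jut (lift F) J = 0" "jpd jvt_update jvt (lift F) J = 0"
  "jpd jux_update jux (lift F) J = 0" "jpd jvx_update jvx (lift F) J = 0"
  by (simp_all add: jpd_def lift_def base_def partial_t_def partial_x_def partial_u_def partial_v_def)

lemma Dt_lift:
  "Dt (lift F) J = partial_t F (base J) + jut J * partial_u F (base J) + jvt J * partial_v F (base J)"
  by (simp add: Dt_def jpd_lift)

lemma Dx_lift:
  "Dx (lift F) J = partial_x F (base J) + jux J * partial_u F (base J) + jvx J * partial_v F (base J)"
  by (simp add: Dx_def jpd_lift)

lemma Dx_Dx_lift:
  fixes F :: "pt \<Rightarrow> real"
  defines "H \<equiv> Dx (lift F)"
  shows "Dx H J = jpd jx_update jx H J + jux J * jpd ju_update ju H J + jvx J * jpd jv_update jv H J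
     + juxx J * partial_u F (base J) + jvxx J * partial_v F (base J)"
proof -
  have H: "H = (\<lambda>K. partial_x F (base K) + jux K * partial_u F (base K) + jvx K * partial_v F (base K))"
    unfolding H_def by (rule ext) (rule Dx_lift)
  have "jpd jux_update jux H J = partial_u F (base J)" "jpd jvx_update jvx H J = partial_v F (base J)"
    unfolding jpd_def H by (rule DERIV_imp_deriv, auto intro!: derivative_eq_intros)+
  moreover have "jpd jut_update jut H J = 0" "jpd jvt_update jvt H J = 0"
    unfolding jpd_def H by simp_all
  ultimately show ?thesis unfolding Dx_def by simp
qed

lemma Dx_Dx_lift_flat:
  assumes "jux J = 0" and "jvx J = 0"
  shows "Dx (Dx (lift F)) J = partial_x (partial_x F) (base J)
     + juxx J * partial_u F (base J) + jvxx J * partial_v F (base J)"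
  unfolding Dx_Dx_lift using assms
  by (simp add: jpd_def Dx_lift base_def partial_x_def)

lemma jpd_cong_eventually:
  assumes "eventually (\<lambda>s. G (upd (\<lambda>_. s) J) = H (upd (\<lambda>_. s) J)) (nhds (sel J))"
  shows "jpd upd sel G J = jpd upd sel H J"
  unfolding jpd_def by (rule deriv_cong_ev[OF assms refl])

lemma D_cong_Omega:
  assumes J: "base J \<in> Omega" and GH: "\<And>K. base K \<in> Omega \<Longrightarrow> G K = H K"
  shows "Dt G J = Dt H J" "Dx G J = Dx H J"
proof -
  have agree: "jpd upd sel G J = jpd upd sel H J"
    if "eventually (\<lambda>s. base (upd (\<lambda>_. s) J) \<in> Omega) (nhds (sel J))" for upd sel
    using that by (intro jpd_cong_eventually) (auto elim!: eventually_mono intro: GH)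
  have "jpd ju_update ju G J = jpd ju_update ju H J" "jpd jv_update jv G J = jpd jv_update jv H J"
    using eventually_nhds_Omega[of "jt J" "jx J" "ju J" "jv J"] J
    by (auto intro!: agree simp: base_def simp del: mem_Omega_iff)
  moreover have "jpd jt_update jt G J = jpd jt_update jt H J"
    "jpd jx_update jx G J = jpd jx_update jx H J"
    "jpd jut_update jut G J = jpd jut_update jut H J"
    "jpd jvt_update jvt G J = jpd jvt_update jvt H J"
    "jpd jux_update jux G J = jpd jux_update jux H J"
    "jpd jvx_update jvx G J = jpd jvx_update jvx H J"
    using J by (auto intro!: agree simp: base_def)
  ultimately show "Dt G J = Dt H J" "Dx G J = Dx H J"
    unfolding Dt_def Dx_def by simp_all
qed

definition first_order_jet ::
    "real \<Rightarrow> real \<Rightarrow> real \<Rightarrow> real \<Rightarrow> real \<Rightarrow> real \<Rightarrow> real \<Rightarrow> real \<Rightarrow> jet" where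
  "first_order_jet t x u v ut vt ux vx =
     \<lparr>jt = t, jx = x, ju = u, jv = v, jut = ut, jvt = vt, jux = ux, jvx = vx,
      jutt = 0, jutx = 0, juxx = 0, jvtt = 0, jvtx = 0, jvxx = 0\<rparr>"

lemma first_order_jet_sel [simp]:
  "jt (first_order_jet t x u v ut vt ux vx) = t" "jx (first_order_jet t x u v ut vt ux vx) = x"
  "ju (first_order_jet t x u v ut vt ux vx) = u" "jv (first_order_jet t x u v ut vt ux vx) = v"
  "jut (first_order_jet t x u v ut vt ux vx) = ut" "jvt (first_order_jet t x u v ut vt ux vx) = vt"
  "jux (first_order_jet t x u v ut vt ux vx) = ux" "jvx (first_order_jet t x u v ut vt ux vx) = vx"
  "jutt (first_order_jet t x u v ut vt ux vx) = 0" "jutx (first_order_jet t x u v ut vt ux vx) = 0"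
  "juxx (first_order_jet t x u v ut vt ux vx) = 0" "jvtt (first_order_jet t x u v ut vt ux vx) = 0"
  "jvtx (first_order_jet t x u v ut vt ux vx) = 0" "jvxx (first_order_jet t x u v ut vt ux vx) = 0"
  "base (first_order_jet t x u v ut vt ux vx) = (t, x, u, v)"
  by (simp_all add: first_order_jet_def base_def)

section \<open>Prolongation of the equation\<close>

lemma DERIV_cmod_Complex_powr:
  assumes "u \<noteq> 0 \<or> v \<noteq> 0"
  shows "DERIV (\<lambda>s. cmod (Complex s v) powr \<gamma>) u :> \<gamma> * cmod (Complex u v) powr (\<gamma> - 2) * u"
    and "DERIV (\<lambda>s. cmod (Complex u s) powr \<gamma>) v :> \<gamma> * cmod (Complex u v) powr (\<gamma> - 2) * v"
proof -
  have first: "DERIV (\<lambda>s. cmod (Complex s b) powr \<gamma>) a :> \<gamma> * cmod (Complex a b) powr (\<gamma> - 2) * a"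
    if "a \<noteq> 0 \<or> b \<noteq> 0" for a b :: real
  proof -
    have "a\<^sup>2 + b\<^sup>2 > 0" using that by (auto simp: sum_power2_gt_zero_iff)
    then have "DERIV (\<lambda>s. sqrt (s\<^sup>2 + b\<^sup>2) powr \<gamma>) a :> \<gamma> * sqrt (a\<^sup>2 + b\<^sup>2) powr (\<gamma> - 2) * a"
      by (auto intro!: derivative_eq_intros simp: powr_diff field_simps)
    then show ?thesis by (simp add: complex_norm)
  qed
  have swap: "cmod (Complex a b) = cmod (Complex b a)" for a b
    by (simp add: complex_norm add.commute)
  show "DERIV (\<lambda>s. cmod (Complex s v) powr \<gamma>) u :> \<gamma> * cmod (Complex u v) powr (\<gamma> - 2) * u"
    using first assms .
  show "DERIV (\<lambda>s. cmod (Complex u s) powr \<gamma>) v :> \<gamma> * cmod (Complex u v) powr (\<gamma> - 2) * v"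
  proof -
    have "DERIV (\<lambda>s. cmod (Complex s u) powr \<gamma>) v :> \<gamma> * cmod (Complex v u) powr (\<gamma> - 2) * v"
      using first[of v u] assms by auto
    then show ?thesis by (simp only: swap[of _ u])
  qed
qed

abbreviation nls_re :: "real \<Rightarrow> (real \<times> real \<Rightarrow> complex) \<Rightarrow> jet \<Rightarrow> real" where
  "nls_re \<gamma> V \<equiv> \<lambda>K. Re (nls \<gamma> V K)"

abbreviation nls_im :: "real \<Rightarrow> (real \<times> real \<Rightarrow> complex) \<Rightarrow> jet \<Rightarrow> real" where
  "nls_im \<gamma> V \<equiv> \<lambda>K. Im (nls \<gamma> V K)"

lemma Re_nls:
  "Re (nls \<gamma> V J) = - jvt J + juxx J + cmod (Complex (ju J) (jv J)) powr \<gamma> * ju J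
     + Re (V (jt J, jx J)) * ju J - Im (V (jt J, jx J)) * jv J"
  by (simp add: nls_def)

lemma Im_nls:
  "Im (nls \<gamma> V J) = jut J + jvxx J + cmod (Complex (ju J) (jv J)) powr \<gamma> * jv J
     + Im (V (jt J, jx J)) * ju J + Re (V (jt J, jx J)) * jv J"
  by (simp add: nls_def)

lemma jpd_nls_re:
  fixes \<gamma> :: real
  assumes J: "base J \<in> Omega"
  defines "N \<equiv> cmod (Complex (ju J) (jv J)) powr \<gamma>"
    and "K \<equiv> \<gamma> * cmod (Complex (ju J) (jv J)) powr (\<gamma> - 2)"
  shows "jpd ju_update ju (nls_re \<gamma> V) J = N + K * ju J * ju J + Re (V (jt J, jx J))"
    "jpd jv_update jv (nls_re \<gamma> V) J = K * jv J * ju J - Im (V (jt J, jx J))"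
    "jpd jut_update jut (nls_re \<gamma> V) J = 0" "jpd jvt_update jvt (nls_re \<gamma> V) J = -1"
    "jpd jux_update jux (nls_re \<gamma> V) J = 0" "jpd jvx_update jvx (nls_re \<gamma> V) J = 0"
    "jpd jutt_update jutt (nls_re \<gamma> V) J = 0" "jpd jutx_update jutx (nls_re \<gamma> V) J = 0"
    "jpd juxx_update juxx (nls_re \<gamma> V) J = 1" "jpd jvtt_update jvtt (nls_re \<gamma> V) J = 0"
    "jpd jvtx_update jvtx (nls_re \<gamma> V) J = 0" "jpd jvxx_update jvxx (nls_re \<gamma> V) J = 0"
proof -
  have uv: "ju J \<noteq> 0 \<or> jv J \<noteq> 0" using J by (simp add: base_def)
  show "jpd ju_update ju (nls_re \<gamma> V) J = N + K * ju J * ju J + Re (V (jt J, jx J))"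
    unfolding jpd_def Re_nls N_def K_def
    by (rule DERIV_imp_deriv, simp)
      (rule DERIV_cmod_Complex_powr[OF uv] derivative_eq_intros refl | simp add: algebra_simps)+
  show "jpd jv_update jv (nls_re \<gamma> V) J = K * jv J * ju J - Im (V (jt J, jx J))"
    unfolding jpd_def Re_nls N_def K_def
    by (rule DERIV_imp_deriv, simp)
      (rule DERIV_cmod_Complex_powr[OF uv] derivative_eq_intros refl | simp add: algebra_simps)+
qed (unfold jpd_def Re_nls, (rule DERIV_imp_deriv, auto intro!: derivative_eq_intros)+)

lemma jpd_nls_im:
  fixes \<gamma> :: real
  assumes J: "base J \<in> Omega"
  defines "N \<equiv> cmod (Complex (ju J) (jv J)) powr \<gamma>"
    and "K \<equiv> \<gamma> * cmod (Complex (ju J) (jv J)) powr (\<gamma> - 2)"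
  shows "jpd ju_update ju (nls_im \<gamma> V) J = K * ju J * jv J + Im (V (jt J, jx J))"
    "jpd jv_update jv (nls_im \<gamma> V) J = N + K * jv J * jv J + Re (V (jt J, jx J))"
    "jpd jut_update jut (nls_im \<gamma> V) J = 1" "jpd jvt_update jvt (nls_im \<gamma> V) J = 0"
    "jpd jux_update jux (nls_im \<gamma> V) J = 0" "jpd jvx_update jvx (nls_im \<gamma> V) J = 0"
    "jpd jutt_update jutt (nls_im \<gamma> V) J = 0" "jpd jutx_update jutx (nls_im \<gamma> V) J = 0"
    "jpd juxx_update juxx (nls_im \<gamma> V) J = 0" "jpd jvtt_update jvtt (nls_im \<gamma> V) J = 0"
    "jpd jvtx_update jvtx (nls_im \<gamma> V) J = 0" "jpd jvxx_update jvxx (nls_im \<gamma> V) J = 1"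
proof -
  have uv: "ju J \<noteq> 0 \<or> jv J \<noteq> 0" using J by (simp add: base_def)
  show "jpd ju_update ju (nls_im \<gamma> V) J = K * ju J * jv J + Im (V (jt J, jx J))"
    unfolding jpd_def Im_nls N_def K_def
    by (rule DERIV_imp_deriv, simp)
      (rule DERIV_cmod_Complex_powr[OF uv] derivative_eq_intros refl | simp add: algebra_simps)+
  show "jpd jv_update jv (nls_im \<gamma> V) J = N + K * jv J * jv J + Re (V (jt J, jx J))"
    unfolding jpd_def Im_nls N_def K_def
    by (rule DERIV_imp_deriv, simp)
      (rule DERIV_cmod_Complex_powr[OF uv] derivative_eq_intros refl | simp add: algebra_simps)+
qed (unfold jpd_def Im_nls, (rule DERIV_imp_deriv, auto intro!: derivative_eq_intros)+)

lemma pr2_nls_re: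
  fixes \<gamma> :: real
  assumes J: "base J \<in> Omega"
  defines "N \<equiv> cmod (Complex (ju J) (jv J)) powr \<gamma>"
    and "K \<equiv> \<gamma> * cmod (Complex (ju J) (jv J)) powr (\<gamma> - 2)"
  shows "pr2 Q (nls_re \<gamma> V) J =
       tau Q (base J) * jpd jt_update jt (nls_re \<gamma> V) J + xi Q (base J) * jpd jx_update jx (nls_re \<gamma> V) J
     + etaU Q (base J) * (N + K * ju J * ju J + Re (V (jt J, jx J)))
     + etaV Q (base J) * (K * jv J * ju J - Im (V (jt J, jx J)))
     - prc Q Dt (lift (etaV Q)) jvt jvx J
     + prc Q Dx (prc Q Dx (lift (etaU Q)) jut jux) jutx juxx J"
  unfolding pr2_def Let_def jpd_nls_re[OF J] N_def K_def by (simp add: lift_def)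

lemma pr2_nls_im:
  fixes \<gamma> :: real
  assumes J: "base J \<in> Omega"
  defines "N \<equiv> cmod (Complex (ju J) (jv J)) powr \<gamma>"
    and "K \<equiv> \<gamma> * cmod (Complex (ju J) (jv J)) powr (\<gamma> - 2)"
  shows "pr2 Q (nls_im \<gamma> V) J =
       tau Q (base J) * jpd jt_update jt (nls_im \<gamma> V) J + xi Q (base J) * jpd jx_update jx (nls_im \<gamma> V) J
     + etaU Q (base J) * (K * ju J * jv J + Im (V (jt J, jx J)))
     + etaV Q (base J) * (N + K * jv J * jv J + Re (V (jt J, jx J)))
     + prc Q Dt (lift (etaU Q)) jut jux J
     + prc Q Dx (prc Q Dx (lift (etaV Q)) jvt jvx) jvtx jvxx J"
  unfolding pr2_def Let_def jpd_nls_im[OF J] N_def K_def by (simp add: lift_def)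

definition vertical :: "(pt \<Rightarrow> pt) \<Rightarrow> bool" where
  "vertical Q \<longleftrightarrow> (\<forall>q\<in>Omega. tau Q q = 0 \<and> xi Q q = 0)"

lemma prc_vertical:
  assumes Q: "vertical Q" and J: "base J \<in> Omega"
  shows "prc Q Dt E wt wx J = Dt E J" "prc Q Dx E wt wx J = Dx E J"
proof -
  have "partial_t (tau Q) (base J) = 0" "partial_u (tau Q) (base J) = 0" "partial_v (tau Q) (base J) = 0"
    "partial_x (tau Q) (base J) = 0" "partial_t (xi Q) (base J) = 0" "partial_x (xi Q) (base J) = 0"
    "partial_u (xi Q) (base J) = 0" "partial_v (xi Q) (base J) = 0"
    using Q by (auto intro!: partials_vanishing_on_Omega[OF J] simp: vertical_def)
  then show "prc Q Dt E wt wx J = Dt E J" "prc Q Dx E wt wx J = Dx E J"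
    by (simp_all add: prc_def Dt_lift Dx_lift)
qed

lemma prc_prc_vertical:
  assumes Q: "vertical Q" and J: "base J \<in> Omega"
  shows "prc Q Dx (prc Q Dx E a b) c d J = Dx (Dx E) J"
proof -
  have "Dx (prc Q Dx E a b) J = Dx (Dx E) J"
    by (rule D_cong_Omega[OF J]) (rule prc_vertical(2)[OF Q])
  then show ?thesis using prc_vertical[OF Q J] by simp
qed

lemma pr2_nls_vertical:
  fixes \<gamma> :: real
  assumes Q: "vertical Q" and J: "base J \<in> Omega"
  defines "N \<equiv> cmod (Complex (ju J) (jv J)) powr \<gamma>"
    and "K \<equiv> \<gamma> * cmod (Complex (ju J) (jv J)) powr (\<gamma> - 2)"
  shows "pr2 Q (nls_re \<gamma> V) J =
       etaU Q (base J) * (N + K * ju J * ju J + Re (V (jt J, jx J)))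
     + etaV Q (base J) * (K * jv J * ju J - Im (V (jt J, jx J)))
     - Dt (lift (etaV Q)) J + Dx (Dx (lift (etaU Q))) J"
    and "pr2 Q (nls_im \<gamma> V) J =
       etaU Q (base J) * (K * ju J * jv J + Im (V (jt J, jx J)))
     + etaV Q (base J) * (N + K * jv J * jv J + Re (V (jt J, jx J)))
     + Dt (lift (etaU Q)) J + Dx (Dx (lift (etaV Q))) J"
  using Q J unfolding pr2_nls_re[OF J] pr2_nls_im[OF J] prc_prc_vertical[OF Q J]
  unfolding prc_vertical[OF Q J] by (simp_all add: vertical_def N_def K_def)

lemma pr2_nls_vertical_first_order:
  fixes \<gamma> ut vt :: real
  assumes Q: "vertical Q" and p: "(t, x, u, v) \<in> Omega"
  defines "J \<equiv> first_order_jet t x u v ut vt 0 0"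
    and "N \<equiv> cmod (Complex u v) powr \<gamma>" and "K \<equiv> \<gamma> * cmod (Complex u v) powr (\<gamma> - 2)"
  shows "pr2 Q (nls_re \<gamma> V) J =
       etaU Q (t, x, u, v) * (N + K * u * u + Re (V (t, x)))
     + etaV Q (t, x, u, v) * (K * v * u - Im (V (t, x)))
     - (partial_t (etaV Q) (t, x, u, v) + ut * partial_u (etaV Q) (t, x, u, v)
        + vt * partial_v (etaV Q) (t, x, u, v))
     + partial_x (partial_x (etaU Q)) (t, x, u, v)"
    and "pr2 Q (nls_im \<gamma> V) J =
       etaU Q (t, x, u, v) * (K * u * v + Im (V (t, x)))
     + etaV Q (t, x, u, v) * (N + K * v * v + Re (V (t, x)))
     + (partial_t (etaU Q) (t, x, u, v) + ut * partial_u (etaU Q) (t, x, u, v)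
        + vt * partial_v (etaU Q) (t, x, u, v))
     + partial_x (partial_x (etaV Q)) (t, x, u, v)"
  using p unfolding J_def N_def K_def
  by (simp_all add: pr2_nls_vertical[OF Q] Dt_lift Dx_Dx_lift_flat)

lemma Cinf_on_affine:
  fixes L :: "'a::euclidean_space \<Rightarrow> 'b::real_normed_vector"
  assumes L: "bounded_linear L"
  shows "Cinf_on S (\<lambda>p. c + L p)"
proof -
  have line: "((\<lambda>s. c + L (p + s *\<^sub>R b)) has_vector_derivative L b) (at 0)" for p b
  proof -
    have "(\<lambda>s. c + L (p + s *\<^sub>R b)) = (\<lambda>s. (c + L p) + s *\<^sub>R L b)"
      using L by (simp add: bounded_linear.linear linear_add linear_scale add.assoc)
    moreover have "((\<lambda>s. (c + L p) + s *\<^sub>R L b) has_vector_derivative L b) (at 0)"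
      by (auto intro!: derivative_eq_intros)
    ultimately show ?thesis by simp
  qed
  have dirder_affine: "dirder b (\<lambda>p. c + L p) = (\<lambda>_. L b)" for b
    unfolding dirder_def by (rule ext, rule vector_derivative_at, rule line)
  have dirder_const: "dirder b (\<lambda>_. d) = (\<lambda>_. 0)" for b and d :: 'b
    unfolding dirder_def by (rule ext, rule vector_derivative_at) (rule has_vector_derivative_const)
  have iterated: "foldr dirder bs (\<lambda>p. c + L p) = (\<lambda>p. c + L p)
      \<or> (\<exists>d. foldr dirder bs (\<lambda>p. c + L p) = (\<lambda>_. d))" for bs
    by (induction bs) (auto simp: dirder_affine dirder_const)
  have cont: "continuous_on S (\<lambda>p. c + L p)"
    using L by (intro continuous_intros) (simp add: linear_continuous_on)
  have diff: "(\<lambda>s. c + L (p + s *\<^sub>R b)) differentiable (at 0)" for p b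
    using line by (rule differentiableI_vector)
  show ?thesis
    unfolding Cinf_on_def
  proof (intro allI impI conjI ballI)
    fix bs :: "'a list"
    show "continuous_on S (foldr dirder bs (\<lambda>p. c + L p))"
      using iterated[of bs] cont by auto
    fix b p
    show "(\<lambda>s. foldr dirder bs (\<lambda>p. c + L p) (p + s *\<^sub>R b)) differentiable (at 0)"
      using iterated[of bs] diff[of p b] by auto
  qed
qed

lemma Cinf_on_const: "Cinf_on S (\<lambda>_. c)"
  using Cinf_on_affine[of "\<lambda>_. 0" S c] by (simp add: bounded_linear_zero)

lemma Cinf_on_differentiable_along_basis:
  assumes f: "Cinf_on S f" and "p \<in> S" "b \<in> Basis" and L: "bounded_linear L"
  shows "(\<lambda>s. L (f (p + (s - a) *\<^sub>R b))) differentiable (at a)"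
proof -
  have "(\<lambda>s. f (p + s *\<^sub>R b)) differentiable (at 0)"
    using f assms(2,3) unfolding Cinf_on_def by (metis empty_subsetI foldr_Nil id_apply set_empty)
  then have "((\<lambda>s. f (p + s *\<^sub>R b)) \<circ> (\<lambda>s. s - a)) differentiable (at a)"
    by (intro differentiable_chain_at) (auto intro!: derivative_intros)
  then have "(L \<circ> ((\<lambda>s. f (p + s *\<^sub>R b)) \<circ> (\<lambda>s. s - a))) differentiable (at a)"
    by (rule differentiable_chain_at) (rule bounded_linear_imp_differentiable[OF L])
  then show ?thesis by (simp add: o_def)
qed

lemma Cinf_on_eta_partials:
  assumes Q: "Cinf_on Omega Q" and p: "(t, x, u, v) \<in> Omega" and \<eta>: "\<eta> = etaU Q \<or> \<eta> = etaV Q"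
  shows "DERIV (\<lambda>s. \<eta> (s, x, u, v)) t :> partial_t \<eta> (t, x, u, v)"
    "DERIV (\<lambda>s. \<eta> (t, s, u, v)) x :> partial_x \<eta> (t, x, u, v)"
    "DERIV (\<lambda>s. \<eta> (t, x, s, v)) u :> partial_u \<eta> (t, x, u, v)"
    "DERIV (\<lambda>s. \<eta> (t, x, u, s)) v :> partial_v \<eta> (t, x, u, v)"
proof -
  obtain L where L: "bounded_linear L" and \<eta>_eq: "\<eta> = (\<lambda>q. L (Q q))"
  proof (cases "\<eta> = etaU Q")
    case True
    then show ?thesis
      by (intro that[of "\<lambda>z. fst (snd (snd z))"]) (auto simp: etaU_def intro!: bounded_linear_intros)
  next
    case False
    then show ?thesis using \<eta>
      by (intro that[of "\<lambda>z. snd (snd (snd z))"]) (auto simp: etaV_def intro!: bounded_linear_intros)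
  qed
  have basis: "(1, 0, 0, 0) \<in> (Basis :: pt set)" "(0, 1, 0, 0) \<in> (Basis :: pt set)"
    "(0, 0, 1, 0) \<in> (Basis :: pt set)" "(0, 0, 0, 1) \<in> (Basis :: pt set)"
    by (auto simp: Basis_prod_def zero_prod_def)
  note line = Cinf_on_differentiable_along_basis[OF Q p _ L]
  show "DERIV (\<lambda>s. \<eta> (s, x, u, v)) t :> partial_t \<eta> (t, x, u, v)"
    using line[OF basis(1), of t]
    by (simp add: \<eta>_eq partial_t_def DERIV_deriv_iff_real_differentiable)
  show "DERIV (\<lambda>s. \<eta> (t, s, u, v)) x :> partial_x \<eta> (t, x, u, v)"
    using line[OF basis(2), of x]
    by (simp add: \<eta>_eq partial_x_def DERIV_deriv_iff_real_differentiable)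
  show "DERIV (\<lambda>s. \<eta> (t, x, s, v)) u :> partial_u \<eta> (t, x, u, v)"
    using line[OF basis(3), of u]
    by (simp add: \<eta>_eq partial_u_def DERIV_deriv_iff_real_differentiable)
  show "DERIV (\<lambda>s. \<eta> (t, x, u, s)) v :> partial_v \<eta> (t, x, u, v)"
    using line[OF basis(4), of v]
    by (simp add: \<eta>_eq partial_v_def DERIV_deriv_iff_real_differentiable)
qed

section \<open>Phase rotations\<close>

lemma is_Lie_symmetry_rotation:
  assumes Q: "\<forall>p\<in>Omega. Q p = c *\<^sub>R M_field p"
  shows "is_Lie_symmetry \<gamma> V Q"
proof -
  have comp: "tau Q q = 0" "xi Q q = 0"
      "etaU Q q = - c * snd (snd (snd q))" "etaV Q q = c * fst (snd (snd q))"
    if "q \<in> Omega" for q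
    using Q that by (cases q, auto simp: tau_def xi_def etaU_def etaV_def M_field_def)+
  have vert: "vertical Q" using comp by (simp add: vertical_def)
  have partials_U: "partial_t (etaU Q) q = 0" "partial_x (etaU Q) q = 0"
      "partial_u (etaU Q) q = 0" "partial_v (etaU Q) q = - c"
    and partials_V: "partial_t (etaV Q) q = 0" "partial_x (etaV Q) q = 0"
      "partial_u (etaV Q) q = c" "partial_v (etaV Q) q = 0"
    if q: "q \<in> Omega" for q
    using partials_cong_Omega[OF q, of "etaU Q" "\<lambda>q. - c * snd (snd (snd q))"]
      partials_cong_Omega[OF q, of "etaV Q" "\<lambda>q. c * fst (snd (snd q))"] comp
    by (cases q; simp add: partial_t_def partial_x_def partial_u_def partial_v_def)+
  show ?thesis
    unfolding is_Lie_symmetry_def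
  proof (intro allI impI conjI)
    fix J assume J: "base J \<in> Omega" and sol: "nls \<gamma> V J = 0"
    have at_J: "etaU Q (base J) = - c * jv J" "etaV Q (base J) = c * ju J"
      using comp[OF J] by (simp_all add: base_def)
    have "Dx (Dx (lift (etaU Q))) J = Dx (\<lambda>K. - c * jvx K) J"
      by (rule D_cong_Omega[OF J]) (simp add: Dx_lift partials_U)
    also have "\<dots> = - c * jvxx J" by (simp add: Dx_def jpd_def)
    finally have "pr2 Q (nls_re \<gamma> V) J = - c * Im (nls \<gamma> V J)"
      unfolding pr2_nls_vertical[OF vert J] Im_nls
      by (simp add: Dt_lift partials_V[OF J] at_J algebra_simps)
    then show "pr2 Q (nls_re \<gamma> V) J = 0" using sol by simp
    have "Dx (Dx (lift (etaV Q))) J = Dx (\<lambda>K. c * jux K) J"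
      by (rule D_cong_Omega[OF J]) (simp add: Dx_lift partials_V)
    also have "\<dots> = c * juxx J" by (simp add: Dx_def jpd_def)
    finally have "pr2 Q (nls_im \<gamma> V) J = c * Re (nls \<gamma> V J)"
      unfolding pr2_nls_vertical[OF vert J] Re_nls
      by (simp add: Dt_lift partials_U[OF J] at_J algebra_simps)
    then show "pr2 Q (nls_im \<gamma> V) J = 0" using sol by simp
  qed
qed

section \<open>Kernel symmetries\<close>

definition kernel_symmetry :: "(pt \<Rightarrow> pt) \<Rightarrow> bool" where
  "kernel_symmetry Q \<longleftrightarrow> (\<forall>\<gamma> V. \<gamma> \<noteq> 0 \<and> Cinf_on UNIV V \<longrightarrow> is_Lie_symmetry \<gamma> V Q)"

lemma kernel_symmetryD:
  assumes "kernel_symmetry Q" "\<gamma> \<noteq> 0" "Cinf_on UNIV V" "base J \<in> Omega" "nls \<gamma> V J = 0"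
  shows "pr2 Q (nls_re \<gamma> V) J = 0" "pr2 Q (nls_im \<gamma> V) J = 0"
  using assms unfolding kernel_symmetry_def is_Lie_symmetry_def by blast+

lemma kernel_symmetry_vertical:
  assumes Q: "kernel_symmetry Q"
  shows "vertical Q"
  unfolding vertical_def
proof
  fix p assume "p \<in> Omega"
  then obtain t x u v where p_eq: "p = (t, x, u, v)" and p: "(t, x, u, v) \<in> Omega"
    by (cases p) auto
  define J where "J = first_order_jet t x u v 0 0 0 0"
  have J: "base J \<in> Omega" using p by (simp add: J_def)
  define c where "c = - complex_of_real (cmod (Complex u v))"
  define R where "R = pr2 Q (nls_re 1 (\<lambda>_. c)) J"
  \<comment> \<open>Changing the slopes of \<open>V\<close> at \<open>(t, x)\<close> changes only the terms multiplied by \<open>\<tau>\<close> and \<open>\<xi>\<close>.\<close>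
  have slopes: "tau Q p * (Re \<alpha> * u - Im \<alpha> * v) + xi Q p * (Re \<beta> * u - Im \<beta> * v) + R = 0"
    for \<alpha> \<beta>
  proof -
    define V where "V = (\<lambda>q::real \<times> real. (c - of_real t * \<alpha> - of_real x * \<beta>)
      + (of_real (fst q) * \<alpha> + of_real (snd q) * \<beta>))"
    have smooth: "Cinf_on UNIV V"
      unfolding V_def by (intro Cinf_on_affine bounded_linear_intros
          bounded_linear_compose[OF bounded_linear_of_real] bounded_linear_fst bounded_linear_snd)
    have "nls 1 V J = 0"
      by (simp add: nls_def V_def J_def c_def complex_eq_iff algebra_simps)
    then have "pr2 Q (nls_re 1 V) J = 0" using kernel_symmetryD(1)[OF Q _ smooth J] by simp
    moreover have "jpd jt_update jt (nls_re 1 V) J = Re \<alpha> * u - Im \<alpha> * v"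
      "jpd jx_update jx (nls_re 1 V) J = Re \<beta> * u - Im \<beta> * v"
      unfolding jpd_def Re_nls
      by (rule DERIV_imp_deriv, auto simp: V_def J_def intro!: derivative_eq_intros)+
    moreover have "jpd jt_update jt (nls_re 1 (\<lambda>_. c)) J = 0"
      "jpd jx_update jx (nls_re 1 (\<lambda>_. c)) J = 0"
      unfolding jpd_def Re_nls by simp_all
    moreover have "V (jt J, jx J) = c" by (simp add: V_def J_def)
    ultimately show ?thesis
      unfolding R_def pr2_nls_re[OF J] by (simp add: p_eq J_def)
  qed
  have "u \<noteq> 0 \<or> v \<noteq> 0" using p by simp
  moreover have "tau Q p * u = 0" "tau Q p * v = 0" "xi Q p * u = 0" "xi Q p * v = 0"
    using slopes[of 0 0] slopes[of 1 0] slopes[of \<i> 0] slopes[of 0 1] slopes[of 0 \<i>] by simp_all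
  ultimately show "tau Q p = 0 \<and> xi Q p = 0" by auto
qed

lemma kernel_symmetry_first_order_equations:
  fixes \<gamma> ut vt :: real
  assumes Q: "kernel_symmetry Q" and p: "(t, x, u, v) \<in> Omega" and "\<gamma> \<noteq> 0"
    and sol: "nls \<gamma> (\<lambda>_. c) (first_order_jet t x u v ut vt 0 0) = 0"
  defines "N \<equiv> cmod (Complex u v) powr \<gamma>" and "K \<equiv> \<gamma> * cmod (Complex u v) powr (\<gamma> - 2)"
  shows "etaU Q (t, x, u, v) * (N + K * u * u + Re c) + etaV Q (t, x, u, v) * (K * v * u - Im c)
       + partial_x (partial_x (etaU Q)) (t, x, u, v)
     = partial_t (etaV Q) (t, x, u, v) + ut * partial_u (etaV Q) (t, x, u, v)
       + vt * partial_v (etaV Q) (t, x, u, v)"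
    and "etaU Q (t, x, u, v) * (K * u * v + Im c) + etaV Q (t, x, u, v) * (N + K * v * v + Re c)
       + partial_x (partial_x (etaV Q)) (t, x, u, v)
     = - (partial_t (etaU Q) (t, x, u, v) + ut * partial_u (etaU Q) (t, x, u, v)
       + vt * partial_v (etaU Q) (t, x, u, v))"
  using kernel_symmetryD[OF Q \<open>\<gamma> \<noteq> 0\<close> Cinf_on_const _ sol] p
    pr2_nls_vertical_first_order[OF kernel_symmetry_vertical[OF Q] p,
      where ut=ut and vt=vt and \<gamma>=\<gamma> and V="\<lambda>_. c"]
  unfolding N_def K_def by simp_all

lemma kernel_symmetry_orthogonal:
  assumes Q: "kernel_symmetry Q" and p: "(t, x, u, v) \<in> Omega"
  shows "etaU Q (t, x, u, v) * u + etaV Q (t, x, u, v) * v = 0"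
proof -
  define r where "r = cmod (Complex u v)"
  have "r > 0" using p by (simp add: r_def complex_eq_iff)
  let ?X = "etaU Q (t, x, u, v) * u + etaV Q (t, x, u, v) * v"
  have eqs: "\<gamma> * r powr (\<gamma> - 2) * u * ?X
      = partial_t (etaV Q) (t, x, u, v) - partial_x (partial_x (etaU Q)) (t, x, u, v)"
    "\<gamma> * r powr (\<gamma> - 2) * v * ?X
      = - partial_t (etaU Q) (t, x, u, v) - partial_x (partial_x (etaV Q)) (t, x, u, v)"
    if "\<gamma> \<noteq> 0" for \<gamma>
  proof -
    have "nls \<gamma> (\<lambda>_. - complex_of_real (r powr \<gamma>)) (first_order_jet t x u v 0 0 0 0) = 0"
      by (simp add: nls_def r_def complex_eq_iff)
    from kernel_symmetry_first_order_equations[OF Q p that this]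
    show "\<gamma> * r powr (\<gamma> - 2) * u * ?X
      = partial_t (etaV Q) (t, x, u, v) - partial_x (partial_x (etaU Q)) (t, x, u, v)"
      "\<gamma> * r powr (\<gamma> - 2) * v * ?X
      = - partial_t (etaU Q) (t, x, u, v) - partial_x (partial_x (etaV Q)) (t, x, u, v)"
      by (simp_all add: r_def algebra_simps)
  qed
  \<comment> \<open>The right-hand sides do not depend on \<open>\<gamma>\<close>, while the coefficients
    for \<open>\<gamma> = 1\<close> and \<open>\<gamma> = -1\<close> differ.\<close>
  have "r powr (-1) + r powr (-3) > 0" using \<open>r > 0\<close> by (simp add: add_pos_pos)
  moreover have "(r powr (-1) + r powr (-3)) * (u * ?X) = 0"
    "(r powr (-1) + r powr (-3)) * (v * ?X) = 0"
    using eqs[of 1] eqs[of "-1"] by (simp_all add: algebra_simps)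
  ultimately have "u * ?X = 0" "v * ?X = 0" by simp_all
  then show ?thesis using p by auto
qed

lemma kernel_symmetry_eta_partials_zero:
  assumes Q: "kernel_symmetry Q" and p: "(t, x, u, v) \<in> Omega"
  shows "partial_u (etaU Q) (t, x, u, v) = 0" and "partial_v (etaV Q) (t, x, u, v) = 0"
proof -
  define r where "r = u\<^sup>2 + v\<^sup>2"
  define N where "N = cmod (Complex u v) powr 1"
  have \<psi>: "Complex u v \<noteq> 0" using p by (simp add: complex_eq_iff)
  have "(1::real) \<noteq> 0" by simp
  note eqs = kernel_symmetry_first_order_equations[OF Q p this]
  \<comment> \<open>The three potentials make the equation hold at jets with \<open>\<psi>\<^sub>t\<close> equal to
    \<open>0\<close>, \<open>1\<close> and \<open>\<i>\<close> respectively.\<close>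
  have "nls 1 (\<lambda>_. - of_real N) (first_order_jet t x u v 0 0 0 0) = 0"
    by (simp add: nls_def N_def complex_eq_iff)
  note at_rest = eqs[OF this]
  have "nls 1 (\<lambda>_. - of_real N - \<i> / Complex u v) (first_order_jet t x u v 1 0 0 0) = 0"
    using \<psi> by (simp add: nls_def N_def field_simps) (simp add: complex_eq_iff)
  note moving_u = eqs[OF this]
  have "nls 1 (\<lambda>_. - of_real N + 1 / Complex u v) (first_order_jet t x u v 0 1 0 0) = 0"
    using \<psi> by (simp add: nls_def N_def field_simps) (simp add: complex_eq_iff)
  note moving_v = eqs[OF this]
  have X: "etaU Q (t, x, u, v) * u / r + etaV Q (t, x, u, v) * v / r = 0"
    using kernel_symmetry_orthogonal[OF Q p] by (simp add: add_divide_distrib[symmetric])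
  from at_rest(2) moving_u(2)
  have "partial_u (etaU Q) (t, x, u, v) = etaU Q (t, x, u, v) * u / r + etaV Q (t, x, u, v) * v / r"
    by (simp add: Re_divide Im_divide r_def algebra_simps)
  then show "partial_u (etaU Q) (t, x, u, v) = 0" using X by simp
  from at_rest(1) moving_v(1)
  have "partial_v (etaV Q) (t, x, u, v) = etaU Q (t, x, u, v) * u / r + etaV Q (t, x, u, v) * v / r"
    by (simp add: Re_divide Im_divide r_def algebra_simps)
  then show "partial_v (etaV Q) (t, x, u, v) = 0" using X by simp
qed

lemma rotation_of_orthogonal:
  fixes f g :: "real \<Rightarrow> real \<Rightarrow> real"
  assumes f: "\<And>a b. a \<noteq> 0 \<or> b \<noteq> 0 \<Longrightarrow> DERIV (\<lambda>s. f s b) a :> 0"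
    and g: "\<And>a b. a \<noteq> 0 \<or> b \<noteq> 0 \<Longrightarrow> DERIV (\<lambda>s. g a s) b :> 0"
    and orth: "\<And>a b. a \<noteq> 0 \<or> b \<noteq> 0 \<Longrightarrow> f a b * a + g a b * b = 0"
    and uv: "u \<noteq> 0 \<or> v \<noteq> 0"
  shows "f u v = - g 1 0 * v" and "g u v = g 1 0 * u"
proof -
  have f_const: "f a b = f 1 b" if "b \<noteq> 0" for a b
    using that by (intro DERIV_isconst_all) (simp add: f)
  have g_const: "g a b = g a c" if "a \<noteq> 0" for a b c
    using that by (intro DERIV_isconst_all) (simp add: g)
  have f_line: "f a b = - g 1 0 * b" if "b \<noteq> 0" for a b
    using orth[of 1 b] that f_const[OF that, of a] g_const[of 1 b 0] by simp
  have g_line: "g a b = g 1 0 * a" if "a \<noteq> 0" for a b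
    using orth[of a 1] that f_line[of 1 a] g_const[OF that, of b 1] by (simp add: algebra_simps)
  show "f u v = - g 1 0 * v"
    using f_line[of v u] orth[OF uv] uv by (cases "v = 0") simp_all
  show "g u v = g 1 0 * u"
    using g_line[of u v] orth[OF uv] uv by (cases "u = 0") simp_all
qed

lemma kernel_symmetry_rotation_form:
  assumes C: "Cinf_on Omega Q" and Q: "kernel_symmetry Q" and p: "(t, x, u, v) \<in> Omega"
  shows "etaU Q (t, x, u, v) = - etaV Q (t, x, 1, 0) * v"
    and "etaV Q (t, x, u, v) = etaV Q (t, x, 1, 0) * u"
proof -
  have "DERIV (\<lambda>s. etaU Q (t, x, s, b)) a :> 0" "DERIV (\<lambda>s. etaV Q (t, x, a, s)) b :> 0"
    "etaU Q (t, x, a, b) * a + etaV Q (t, x, a, b) * b = 0"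
    if "a \<noteq> 0 \<or> b \<noteq> 0" for a b
  proof -
    from that have q: "(t, x, a, b) \<in> Omega" by simp
    show "DERIV (\<lambda>s. etaU Q (t, x, s, b)) a :> 0"
      using Cinf_on_eta_partials(3)[OF C q, of "etaU Q"] kernel_symmetry_eta_partials_zero(1)[OF Q q]
      by simp
    show "DERIV (\<lambda>s. etaV Q (t, x, a, s)) b :> 0"
      using Cinf_on_eta_partials(4)[OF C q, of "etaV Q"] kernel_symmetry_eta_partials_zero(2)[OF Q q]
      by simp
    show "etaU Q (t, x, a, b) * a + etaV Q (t, x, a, b) * b = 0"
      using kernel_symmetry_orthogonal[OF Q q] .
  qed
  note hyps = this
  have uv: "u \<noteq> 0 \<or> v \<noteq> 0" using p by simp
  show "etaU Q (t, x, u, v) = - etaV Q (t, x, 1, 0) * v"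
    using hyps uv by (rule rotation_of_orthogonal(1)[where f="\<lambda>a b. etaU Q (t, x, a, b)"])
  show "etaV Q (t, x, u, v) = etaV Q (t, x, 1, 0) * u"
    using hyps uv by (rule rotation_of_orthogonal(2)[where g="\<lambda>a b. etaV Q (t, x, a, b)"])
qed

lemma kernel_symmetry_speed_partials:
  assumes C: "Cinf_on Omega Q" and Q: "kernel_symmetry Q"
  shows "partial_t (etaV Q) (t, x, 1, 0) = 0" and "partial_x (etaV Q) (t, x, 1, 0) = 0"
proof -
  have vert: "vertical Q" using Q by (rule kernel_symmetry_vertical)
  have p: "(t, x, 1, 0) \<in> Omega" by simp
  define c where "c = (\<lambda>s. etaV Q (t, s, 1, 0))"
  define D where "D = partial_x (etaV Q) (t, x, 1, 0)"
  have rot: "etaU Q (t, s, 1, r) = - c s * r" for s r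
    using kernel_symmetry_rotation_form(1)[OF C Q, of t s 1 r] by (simp add: c_def)
  have dc: "DERIV c x :> D"
    unfolding c_def D_def by (rule Cinf_on_eta_partials(2)[OF C p]) simp
  have "(1::real) \<noteq> 0" "nls 1 (\<lambda>_. - 1) (first_order_jet t x 1 0 0 0 0 0) = 0"
    by (simp_all add: nls_def complex_eq_iff complex_norm)
  from kernel_symmetry_first_order_equations(1)[OF Q p this]
  show ct: "partial_t (etaV Q) (t, x, 1, 0) = 0"
    by (simp add: rot partial_x_def complex_norm)
  \<comment> \<open>At a jet with \<open>\<psi>\<^sub>x = \<i>\<close> the second prolongation picks up \<open>-2 D\<close>.\<close>
  define J where "J = first_order_jet t x 1 0 0 0 0 1"
  have J: "base J \<in> Omega" by (simp add: J_def)
  have "nls 1 (\<lambda>_. - 1) J = 0" by (simp add: J_def nls_def complex_eq_iff complex_norm)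
  then have invariance: "pr2 Q (nls_re 1 (\<lambda>_. - 1)) J = 0"
    using kernel_symmetryD(1)[OF Q _ Cinf_on_const J] by simp
  have Hx: "jpd jx_update jx (Dx (lift (etaU Q))) J = - D"
    unfolding jpd_def Dx_lift
    by (rule DERIV_imp_deriv)
      (auto simp: J_def base_def partial_x_def partial_v_def rot intro!: derivative_eq_intros dc)
  have "deriv (\<lambda>s. - (c s * r)) x = - D * r" for r
    by (rule DERIV_imp_deriv) (auto intro!: derivative_eq_intros dc)
  then have Hv: "jpd jv_update jv (Dx (lift (etaU Q))) J = - D"
    unfolding jpd_def Dx_lift
    by (intro DERIV_imp_deriv)
      (auto simp: J_def base_def partial_x_def partial_v_def rot intro!: derivative_eq_intros)
  have "pr2 Q (nls_re 1 (\<lambda>_. - 1)) J = - partial_t (etaV Q) (t, x, 1, 0) - 2 * D"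
    unfolding pr2_nls_vertical(1)[OF vert J] Dx_Dx_lift Hx Hv
    by (simp add: J_def Dt_lift rot)
  then have "D = 0" using invariance ct by simp
  then show "partial_x (etaV Q) (t, x, 1, 0) = 0" by (simp add: D_def)
qed

lemma constant_of_zero_partials:
  fixes h :: "real \<Rightarrow> real \<Rightarrow> real"
  assumes "\<And>t x. DERIV (\<lambda>s. h s x) t :> 0" and "\<And>t x. DERIV (\<lambda>s. h t s) x :> 0"
  shows "h t x = h 0 0"
  using assms DERIV_isconst_all[of "\<lambda>s. h s x" t 0] DERIV_isconst_all[of "\<lambda>s. h 0 s" x 0]
  by simp

lemma kernel_symmetry_rotation:
  assumes C: "Cinf_on Omega Q" and Q: "kernel_symmetry Q"
  shows "\<exists>c::real. \<forall>p\<in>Omega. Q p = c *\<^sub>R M_field p"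
proof (intro exI ballI)
  fix p assume "p \<in> Omega"
  then obtain t x u v where p_eq: "p = (t, x, u, v)" and p: "(t, x, u, v) \<in> Omega"
    by (cases p) auto
  have "DERIV (\<lambda>s. etaV Q (s, x', 1, 0)) t' :> 0" "DERIV (\<lambda>s. etaV Q (t', s, 1, 0)) x' :> 0" for t' x'
    using Cinf_on_eta_partials(1,2)[OF C, of t' x' 1 0 "etaV Q"] kernel_symmetry_speed_partials[OF C Q]
    by simp_all
  then have speed: "etaV Q (t, x, 1, 0) = etaV Q (0, 0, 1, 0)"
    by (rule constant_of_zero_partials)
  have "tau Q p = 0" "xi Q p = 0"
    using kernel_symmetry_vertical[OF Q] \<open>p \<in> Omega\<close> by (simp_all add: vertical_def)
  then have "Q p = (0, 0, etaU Q p, etaV Q p)"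
    by (simp add: tau_def xi_def etaU_def etaV_def prod_eq_iff)
  also have "\<dots> = etaV Q (0, 0, 1, 0) *\<^sub>R M_field p"
    using kernel_symmetry_rotation_form[OF C Q p] by (simp add: p_eq speed M_field_def)
  finally show "Q p = etaV Q (0, 0, 1, 0) *\<^sub>R M_field p" .
qed

theorem theorem2:
  shows "\<Inter> {A_max \<gamma> V | \<gamma> V. \<gamma> \<noteq> 0 \<and> Cinf_on UNIV V}
       = {Q. Cinf_on Omega Q \<and> (\<exists>c::real. \<forall>p\<in>Omega. Q p = c *\<^sub>R M_field p)}"
proof (intro set_eqI iffI)
  fix Q assume "Q \<in> \<Inter> {A_max \<gamma> V | \<gamma> V. \<gamma> \<noteq> 0 \<and> Cinf_on UNIV V}"
  then have A: "Q \<in> A_max \<gamma> V" if "\<gamma> \<noteq> 0" "Cinf_on UNIV V" for \<gamma> V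
    using that by blast
  have C: "Cinf_on Omega Q"
    using A[OF _ Cinf_on_const, of 1] by (simp add: A_max_def)
  have "kernel_symmetry Q"
    using A by (simp add: kernel_symmetry_def A_max_def)
  with C show "Q \<in> {Q. Cinf_on Omega Q \<and> (\<exists>c::real. \<forall>p\<in>Omega. Q p = c *\<^sub>R M_field p)}"
    using kernel_symmetry_rotation by blast
next
  fix Q assume "Q \<in> {Q. Cinf_on Omega Q \<and> (\<exists>c::real. \<forall>p\<in>Omega. Q p = c *\<^sub>R M_field p)}"
  then show "Q \<in> \<Inter> {A_max \<gamma> V | \<gamma> V. \<gamma> \<noteq> 0 \<and> Cinf_on UNIV V}"
    using is_Lie_symmetry_rotation by (auto simp: A_max_def)
qed

end
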